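(* Fix an integer $k \ge 2$, $\mathbf{f} \in [0,1)^k\setminus\{\mathbf{0}\}$, $\mathbf{r}^1,\dots,\mathbf{r}^{n} \in \mathbb{R}^k$, and $\tau \geq 2k$. Then there exists a decomposition of $\Delta_k^\tau$ obtained by at most $2n(\tau+3)^2$ hyperplanes such that within each region, each of the functions $\boldsymbol{\mu}\mapsto\pi_{\mathbf{f},\boldsymbol{\mu}}(\mathbf{r}^j)$, $j=1,\dots,n$, is a fixed rational function given by the quotient of two affine linear functions of $\boldsymbol{\mu}$, where the denominator is a fixed function of $\boldsymbol{\mu}$ that is positive on $\Delta_k^\tau$.
   Context: $\Delta_k^\tau = \{\mathbf{x} \in \mathbb{R}^k: \mathbf{x}_1,\dots,\mathbf{x}_k \geq \frac{1}{\tau}, \sum_{i=1}^{k}\mathbf{x}_i=1\}$. $\mathbf{e}^i$ is the $i$-th standard basis vector of $\mathbb{R}^k$. For $\boldsymbol{\mu}\in\Delta_k^\tau$ define $\mathbf{a}^0 = \frac{\sum_{i=1}^{k}\boldsymbol{\mu}_i\mathbf{e}^i}{\sum_{i=1}^{k}\boldsymbol{\mu}_i\mathbf{f}_i}$, $\mathbf{a}^i = \frac{1}{\mathbf{f}_i-1}\mathbf{e}^i$ ($i=1,\dots,k$), and $\pi_{\mathbf{f},\boldsymbol{\mu}}(\mathbf{r}) = \min_{\mathbf{z} \in \mathbb{Z}^k} \max_{i=0, \ldots, k} \langle \mathbf{a}^i, \mathbf{r} + \mathbf{z}\rangle$ for $\mathbf{r}\in\mathbb{R}^k$. *)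

theory Defs
  imports "HOL-Analysis.Analysis"
begin

definition simplex_tau :: "real \<Rightarrow> (real^'k) set" where
  "simplex_tau \<tau> = {x. (\<forall>i. x $ i \<ge> 1 / \<tau>) \<and> (\<Sum>i\<in>UNIV. x $ i) = 1}"

definition std_basis :: "'k \<Rightarrow> real^'k" where
  "std_basis i = (\<chi> j. if j = i then 1 else 0)"

definition a_zero :: "real^'k \<Rightarrow> real^'k \<Rightarrow> real^'k" where
  "a_zero f \<mu> = (1 / (\<Sum>i\<in>UNIV. \<mu> $ i * f $ i)) *\<^sub>R (\<Sum>i\<in>UNIV. (\<mu> $ i) *\<^sub>R std_basis i)"

definition a_idx :: "real^'k \<Rightarrow> 'k \<Rightarrow> real^'k" where
  "a_idx f i = (1 / (f $ i - 1)) *\<^sub>R std_basis i"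

text \<open>pi_{f,mu}(r) = min over z in Z^k of max_{i=0..k} <a^i, r + z>
  (the minimum is rendered as the infimum over integer vectors z).\<close>
definition pi_fun :: "real^'k \<Rightarrow> real^'k \<Rightarrow> real^'k \<Rightarrow> real" where
  "pi_fun f \<mu> r =
     (INF z \<in> {z :: real^'k. \<forall>i. z $ i \<in> \<int>}.
        max (inner (a_zero f \<mu>) (r + z)) (Max ((\<lambda>i. inner (a_idx f i) (r + z)) ` UNIV)))"

text \<open>Region of the arrangement of the hyperplanes H = {(w,c)} (hyperplane {y. w.y = c})
  restricted to S that contains x: all points of S with the same sign vector as x.\<close>
definition arrangement_cell :: "((real^'k) \<times> real) set \<Rightarrow> (real^'k) set \<Rightarrow> real^'k \<Rightarrow> (real^'k) set" where
  "arrangement_cell H S x = {y \<in> S. \<forall>(w, c) \<in> H. sgn (inner w y - c) = sgn (inner w x - c)}"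

end

theory Submission
  imports Defs
begin

text \<open>Writing out the forms a^i, pi_{f,mu}(r) <= t holds iff some integer z satisfies
  z >= -floor(r + t(1 - f)) componentwise and <mu, r + z> <= t <mu, f>; as mu >= 0 the best
  choice is z = -floor(r + t(1 - f)). Hence pi_{f,mu}(r) is the least zero crossing of the slack
  h(t) = <mu, r - floor(r + t(1 - f)) - t f>, which is strictly decreasing, positive for t < 0 and
  nonpositive at t = 1. On [0,1] the floor changes only at the at most 2k + 2 breakpoints where
  some r_i + t(1 - f_i) is an integer, and between them h is affine in t. The values of h at
  the breakpoints and its left limits there are linear forms in mu. Their signs decide whether
  the crossing lies at a breakpoint t (and then pi = t = <t f, mu>/<f, mu>) or strictly between
  two consecutive breakpoints, where h(t) = <mu, q> - t <mu, f> for a fixed q and pi =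
  <q, mu>/<f, mu>. So each r^j needs at most 4k + 4 hyperplanes through the origin, and
  n (4k + 4) <= 2 n (tau + 3)^2.\<close>

lemma inner_mono_nonneg:
  fixes \<mu> x y :: "real^'k"
  assumes "\<forall>i. 0 \<le> \<mu>$i" and "\<forall>i. x$i \<le> y$i"
  shows "inner \<mu> x \<le> inner \<mu> y"
  unfolding inner_vec_def using assms by (auto intro!: sum_mono mult_left_mono)

lemma nonneg_if_pos_on_left:
  fixes u c a t :: real
  assumes "a < t" "0 < c" and pos: "\<forall>s. a \<le> s \<and> s < t \<longrightarrow> 0 < u + (t - s) * c"
  shows "0 \<le> u"
proof (rule ccontr)
  assume "\<not> 0 \<le> u"
  define s where "s = max a (t + u / (2 * c))"
  have "u / (2 * c) < 0"
    using \<open>\<not> 0 \<le> u\<close> \<open>0 < c\<close> by (simp add: divide_neg_pos)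
  then have "a \<le> s" "s < t"
    using \<open>a < t\<close> by (auto simp: s_def)
  moreover have "(t - s) * c \<le> - u / 2"
  proof -
    have "t - s \<le> - u / (2 * c)"
      by (simp add: s_def)
    then show ?thesis
      using \<open>0 < c\<close> by (simp add: field_simps)
  qed
  ultimately show False
    using pos \<open>\<not> 0 \<le> u\<close> by force
qed

lemma inner_pos_if_pos_nonneg_nonzero:
  fixes \<mu> f :: "real^'k"
  assumes "\<forall>i. 0 < \<mu>$i" "\<forall>i. 0 \<le> f$i" "f \<noteq> 0"
  shows "0 < inner \<mu> f"
proof -
  obtain i0 where "f$i0 \<noteq> 0"
    using assms(3) by (metis vec_eq_iff zero_index)
  then have "0 < \<mu>$i0 * f$i0"
    using assms(1,2) by (simp add: order_less_le)
  then show ?thesis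
    unfolding inner_vec_def using assms(1,2)
    by (intro sum_pos2[of UNIV i0]) (auto simp: less_imp_le)
qed

lemma simplex_tau_pos:
  assumes "0 < \<tau>" "\<mu> \<in> simplex_tau \<tau>"
  shows "0 < \<mu>$i"
  using assms by (auto simp: simplex_tau_def intro: less_le_trans[of 0 "1 / \<tau>"])

definition pi_objective :: "real^'k \<Rightarrow> real^'k \<Rightarrow> real^'k \<Rightarrow> real" where
  "pi_objective f \<mu> y = max (inner (a_zero f \<mu>) y) (Max ((\<lambda>i. inner (a_idx f i) y) ` UNIV))"

lemma pi_fun_eq_INF:
  "pi_fun f \<mu> r = (INF z \<in> {z. \<forall>i. z$i \<in> \<int>}. pi_objective f \<mu> (r + z))"
  unfolding pi_fun_def pi_objective_def ..

lemma inner_a_zero: "inner (a_zero f \<mu>) y = inner \<mu> y / inner \<mu> f"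
proof -
  have "(\<Sum>i\<in>UNIV. \<mu>$i *\<^sub>R std_basis i) = \<mu>"
    using basis_expansion[of \<mu>] by (simp add: std_basis_def axis_def scalar_mult_eq_scaleR)
  moreover have "(\<Sum>i\<in>UNIV. \<mu>$i * f$i) = inner \<mu> f"
    by (simp add: inner_vec_def)
  ultimately show ?thesis
    unfolding a_zero_def by simp
qed

lemma inner_a_idx: "inner (a_idx f i) y = y$i / (f$i - 1)"
proof -
  have "std_basis i = axis i 1"
    by (simp add: std_basis_def axis_def)
  then show ?thesis
    by (simp add: a_idx_def inner_axis')
qed

lemma pi_objective_le_iff:
  assumes "\<forall>i. f$i < 1" and "0 < inner \<mu> f"
  shows "pi_objective f \<mu> y \<le> t \<longleftrightarrow> inner \<mu> y \<le> t * inner \<mu> f \<and> (\<forall>i. t * (f$i - 1) \<le> y$i)"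
proof -
  have "inner (a_idx f i) y \<le> t \<longleftrightarrow> t * (f$i - 1) \<le> y$i" for i
    using assms(1)[rule_format, of i] by (simp add: inner_a_idx neg_divide_le_eq)
  then show ?thesis
    using assms(2) by (simp add: pi_objective_def inner_a_zero pos_divide_le_eq)
qed

definition floor_vec :: "real^'k \<Rightarrow> real^'k \<Rightarrow> real \<Rightarrow> real^'k" where
  "floor_vec f \<rho> t = (\<chi> i. of_int \<lfloor>\<rho>$i + t * (1 - f$i)\<rfloor>)"

(* ceiling x - 1 is the left limit of floor at x *)
definition floor_vec_left :: "real^'k \<Rightarrow> real^'k \<Rightarrow> real \<Rightarrow> real^'k" where
  "floor_vec_left f \<rho> t = (\<chi> i. of_int (\<lceil>\<rho>$i + t * (1 - f$i)\<rceil> - 1))"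

definition slack :: "real^'k \<Rightarrow> real^'k \<Rightarrow> real \<Rightarrow> real^'k" where
  "slack f \<rho> t = \<rho> - floor_vec f \<rho> t - t *\<^sub>R f"

definition slack_left :: "real^'k \<Rightarrow> real^'k \<Rightarrow> real \<Rightarrow> real^'k" where
  "slack_left f \<rho> t = \<rho> - floor_vec_left f \<rho> t - t *\<^sub>R f"

definition is_threshold :: "real^'k \<Rightarrow> real^'k \<Rightarrow> real^'k \<Rightarrow> real \<Rightarrow> bool" where
  "is_threshold f \<rho> \<mu> t \<longleftrightarrow> inner \<mu> (slack f \<rho> t) \<le> 0 \<and> (\<forall>s<t. 0 < inner \<mu> (slack f \<rho> s))"

lemma neg_floor_vec_le_int:
  assumes "z$i \<in> \<int>" "t * (f$i - 1) \<le> \<rho>$i + z$i"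
  shows "- floor_vec f \<rho> t $ i \<le> z$i"
proof -
  obtain m where m: "z$i = of_int m"
    using assms(1) by (meson Ints_cases)
  then have "of_int (- m) \<le> \<rho>$i + t * (1 - f$i)"
    using assms(2) by (simp add: algebra_simps)
  then have "- m \<le> \<lfloor>\<rho>$i + t * (1 - f$i)\<rfloor>"
    using le_floor_iff by blast
  then show ?thesis
    by (simp add: floor_vec_def m)
qed

lemma slack_pos_of_neg:
  fixes \<mu> :: "real^'k"
  assumes "\<forall>i. 0 < \<mu>$i" and "s < 0"
  shows "0 < inner \<mu> (slack f \<rho> s)"
  unfolding inner_vec_def
proof (rule sum_pos)
  fix i
  have "of_int \<lfloor>\<rho>$i + s * (1 - f$i)\<rfloor> \<le> \<rho>$i + s * (1 - f$i)"
    by (rule of_int_floor_le)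
  then have "0 < slack f \<rho> s $ i"
    using assms(2) by (simp add: slack_def floor_vec_def algebra_simps)
  then show "0 < inner (\<mu>$i) (slack f \<rho> s $ i)"
    using assms(1) by simp
qed auto

lemma slack_one_nonpos:
  fixes \<mu> :: "real^'k"
  assumes "\<forall>i. 0 \<le> \<mu>$i"
  shows "inner \<mu> (slack f \<rho> 1) \<le> 0"
proof -
  have "slack f \<rho> 1 $ i \<le> 0" for i
    using real_of_int_floor_add_one_gt[of "\<rho>$i + 1 * (1 - f$i)"]
    by (simp add: slack_def floor_vec_def algebra_simps)
  then show ?thesis
    using inner_mono_nonneg[OF assms, of "slack f \<rho> 1" 0] by simp
qed

lemma is_threshold_0_iff:
  fixes \<mu> :: "real^'k"
  assumes "\<forall>i. 0 < \<mu>$i"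
  shows "is_threshold f \<rho> \<mu> 0 \<longleftrightarrow> inner \<mu> (slack f \<rho> 0) \<le> 0"
  using slack_pos_of_neg[OF assms] by (auto simp: is_threshold_def)

lemma inner_slack_shift:
  assumes "floor_vec f \<rho> s = floor_vec f \<rho> t"
  shows "inner \<mu> (slack f \<rho> s) = inner \<mu> (slack f \<rho> t) - (s - t) * inner \<mu> f"
  using assms by (simp add: slack_def algebra_simps)

definition breakpoints :: "real^'k \<Rightarrow> real^'k \<Rightarrow> real set" where
  "breakpoints f \<rho> = {0, 1} \<union> (\<Union>i. {t \<in> {0..1}. \<rho>$i + t * (1 - f$i) \<in> \<int>})"

definition cell_normals :: "real^'k \<Rightarrow> real^'k \<Rightarrow> (real^'k) set" where
  "cell_normals f \<rho> = slack f \<rho> ` breakpoints f \<rho> \<union> slack_left f \<rho> ` breakpoints f \<rho>"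

lemma breakpoints_subset: "breakpoints f \<rho> \<subseteq> {0..1}"
  by (auto simp: breakpoints_def)

lemma zero_one_mem_breakpoints: "0 \<in> breakpoints f \<rho>" "1 \<in> breakpoints f \<rho>"
  by (auto simp: breakpoints_def)

definition same_signs :: "(real^'k) set \<Rightarrow> real^'k \<Rightarrow> real^'k \<Rightarrow> bool" where
  "same_signs W \<mu> \<mu>0 \<longleftrightarrow> (\<forall>w\<in>W. sgn (inner w \<mu>) = sgn (inner w \<mu>0))"

lemma same_signs_iffs:
  assumes "same_signs W \<mu> \<mu>0" "w \<in> W"
  shows "inner \<mu> w \<le> 0 \<longleftrightarrow> inner \<mu>0 w \<le> 0" "0 \<le> inner \<mu> w \<longleftrightarrow> 0 \<le> inner \<mu>0 w"
    and "inner \<mu> w < 0 \<longleftrightarrow> inner \<mu>0 w < 0" "0 < inner \<mu> w \<longleftrightarrow> 0 < inner \<mu>0 w"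
  using assms unfolding same_signs_def
  by (auto simp: inner_commute sgn_if split: if_splits)

lemma same_signs_if_in_arrangement_cell:
  assumes "(\<lambda>w. (w, 0)) ` (W - {0}) \<subseteq> H" and "\<mu> \<in> arrangement_cell H S \<mu>0"
  shows "same_signs W \<mu> \<mu>0"
  unfolding same_signs_def
proof
  fix w assume "w \<in> W"
  show "sgn (inner w \<mu>) = sgn (inner w \<mu>0)"
  proof (cases "w = 0")
    case False
    with \<open>w \<in> W\<close> assms(1) have "(w, 0) \<in> H"
      by blast
    with assms(2) show ?thesis
      by (auto simp: arrangement_cell_def)
  qed simp
qed

context
  fixes f :: "real^'k"
  assumes f_range: "\<forall>i. 0 \<le> f$i \<and> f$i < 1"
begin

lemma exists_integer_objective_le_iff:
  assumes \<mu>_nonneg: "\<forall>i. 0 \<le> \<mu>$i" and f_pos: "0 < inner \<mu> f"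
  shows "(\<exists>z. (\<forall>i. z$i \<in> \<int>) \<and> pi_objective f \<mu> (\<rho> + z) \<le> t) \<longleftrightarrow> inner \<mu> (slack f \<rho> t) \<le> 0"
proof -
  have objective_le: "pi_objective f \<mu> y \<le> t \<longleftrightarrow>
      inner \<mu> y \<le> t * inner \<mu> f \<and> (\<forall>i. t * (f$i - 1) \<le> y$i)" for y
    using f_range f_pos by (intro pi_objective_le_iff) auto
  show ?thesis
  proof
    assume "\<exists>z. (\<forall>i. z$i \<in> \<int>) \<and> pi_objective f \<mu> (\<rho> + z) \<le> t"
    then obtain z where z_int: "\<forall>i. z$i \<in> \<int>" and "pi_objective f \<mu> (\<rho> + z) \<le> t"
      by blast
    then have z_inner: "inner \<mu> (\<rho> + z) \<le> t * inner \<mu> f"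
      and z_ge: "\<forall>i. t * (f$i - 1) \<le> \<rho>$i + z$i"
      unfolding objective_le by auto
    have "- floor_vec f \<rho> t $ i \<le> z$i" for i
      using neg_floor_vec_le_int z_int z_ge by blast
    then have "inner \<mu> (- floor_vec f \<rho> t) \<le> inner \<mu> z"
      using inner_mono_nonneg[OF \<mu>_nonneg, of "- floor_vec f \<rho> t" z] by simp
    with z_inner show "inner \<mu> (slack f \<rho> t) \<le> 0"
      by (simp add: slack_def inner_diff_right inner_add_right)
  next
    assume slack_nonpos: "inner \<mu> (slack f \<rho> t) \<le> 0"
    have "t * (f$i - 1) \<le> (\<rho> - floor_vec f \<rho> t) $ i" for i
      using of_int_floor_le[of "\<rho>$i + t * (1 - f$i)"] by (simp add: floor_vec_def algebra_simps)
    moreover have "inner \<mu> (\<rho> - floor_vec f \<rho> t) \<le> t * inner \<mu> f"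
      using slack_nonpos by (simp add: slack_def inner_diff_right)
    ultimately have "pi_objective f \<mu> (\<rho> + - floor_vec f \<rho> t) \<le> t"
      unfolding objective_le by simp
    then show "\<exists>z. (\<forall>i. z$i \<in> \<int>) \<and> pi_objective f \<mu> (\<rho> + z) \<le> t"
      by (intro exI[of _ "- floor_vec f \<rho> t"]) (simp add: floor_vec_def)
  qed
qed

lemma pi_fun_eq_threshold:
  assumes \<mu>_nonneg: "\<forall>i. 0 \<le> \<mu>$i" and f_pos: "0 < inner \<mu> f"
    and threshold: "is_threshold f \<rho> \<mu> t"
  shows "pi_fun f \<mu> \<rho> = t"
proof -
  let ?Z = "{z. \<forall>i. z$i \<in> \<int>}"
  note attained_iff = exists_integer_objective_le_iff[OF \<mu>_nonneg f_pos]
  have lower: "t \<le> pi_objective f \<mu> (\<rho> + z)" if "z \<in> ?Z" for z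
  proof (rule ccontr)
    assume "\<not> t \<le> pi_objective f \<mu> (\<rho> + z)"
    moreover have "inner \<mu> (slack f \<rho> (pi_objective f \<mu> (\<rho> + z))) \<le> 0"
      using attained_iff that by blast
    ultimately show False
      using threshold unfolding is_threshold_def by (meson not_le)
  qed
  obtain z where z: "z \<in> ?Z" and "pi_objective f \<mu> (\<rho> + z) \<le> t"
    using attained_iff[of \<rho> t] threshold unfolding is_threshold_def by blast
  with lower have "pi_objective f \<mu> (\<rho> + z) = t"
    by fastforce
  then have attained: "t \<in> (\<lambda>z. pi_objective f \<mu> (\<rho> + z)) ` ?Z"
    using z by (intro rev_image_eqI) auto
  show ?thesis
    unfolding pi_fun_eq_INF by (rule cInf_eq_minimum[OF attained]) (use lower in blast)
qed

lemma floor_vec_mono: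
  assumes "s \<le> t"
  shows "floor_vec f \<rho> s $ i \<le> floor_vec f \<rho> t $ i"
proof -
  have "s * (1 - f$i) \<le> t * (1 - f$i)"
    using f_range[rule_format, of i] assms by (intro mult_right_mono) auto
  then show ?thesis
    by (simp add: floor_vec_def floor_mono)
qed

lemma slack_strict_antimono:
  assumes "\<forall>i. 0 \<le> \<mu>$i" "0 < inner \<mu> f" "s < t"
  shows "inner \<mu> (slack f \<rho> t) < inner \<mu> (slack f \<rho> s)"
proof -
  have "inner \<mu> (floor_vec f \<rho> s) \<le> inner \<mu> (floor_vec f \<rho> t)"
    using inner_mono_nonneg[OF assms(1)] floor_vec_mono assms(3) by simp
  moreover have "s * inner \<mu> f < t * inner \<mu> f"
    using assms(2,3) by simp
  ultimately show ?thesis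
    by (simp add: slack_def inner_diff_right)
qed

lemma integer_crossings_subset:
  fixes \<rho> :: "real^'k"
  shows "{t \<in> {0..1}. \<rho>$i + t * (1 - f$i) \<in> \<int>} \<subseteq>
     {(of_int \<lfloor>\<rho>$i\<rfloor> - \<rho>$i) / (1 - f$i), (of_int \<lfloor>\<rho>$i\<rfloor> + 1 - \<rho>$i) / (1 - f$i)}"
proof
  fix t assume "t \<in> {t \<in> {0..1}. \<rho>$i + t * (1 - f$i) \<in> \<int>}"
  then have t: "0 \<le> t" "t \<le> 1" and "\<rho>$i + t * (1 - f$i) \<in> \<int>"
    by auto
  then obtain m where m: "\<rho>$i + t * (1 - f$i) = of_int m"
    by (auto elim: Ints_cases)
  have slope: "0 < 1 - f$i" "1 - f$i \<le> 1"
    using f_range by auto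
  then have "0 \<le> t * (1 - f$i)" "t * (1 - f$i) \<le> 1"
    using t by (auto intro: mult_le_one)
  then have "\<rho>$i \<le> of_int m" "of_int m \<le> \<rho>$i + 1"
    using m by auto
  then have "\<lceil>\<rho>$i\<rceil> \<le> m" "m - 1 \<le> \<lfloor>\<rho>$i\<rfloor>"
    by (simp_all add: ceiling_le_iff le_floor_iff)
  then have "m = \<lfloor>\<rho>$i\<rfloor> \<or> m = \<lfloor>\<rho>$i\<rfloor> + 1"
    using floor_le_ceiling[of "\<rho>$i"] by linarith
  moreover have "t = (of_int m - \<rho>$i) / (1 - f$i)"
    using m slope by (simp add: field_simps)
  ultimately show "t \<in> {(of_int \<lfloor>\<rho>$i\<rfloor> - \<rho>$i) / (1 - f$i), (of_int \<lfloor>\<rho>$i\<rfloor> + 1 - \<rho>$i) / (1 - f$i)}"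
    by auto
qed

lemma finite_breakpoints: "finite (breakpoints f \<rho>)"
  unfolding breakpoints_def using integer_crossings_subset[of \<rho>] by (auto intro: finite_subset)

lemma card_breakpoints_le: "card (breakpoints f \<rho>) \<le> 2 + 2 * CARD('k)"
proof -
  let ?crossings = "\<lambda>i. {t \<in> {0..1}. \<rho>$i + t * (1 - f$i) \<in> \<int>}"
  have "card (?crossings i) \<le> 2" for i
  proof -
    obtain x y where "?crossings i \<subseteq> {x, y}"
      using integer_crossings_subset by blast
    then have "card (?crossings i) \<le> card {x, y}"
      by (intro card_mono) auto
    also have "\<dots> \<le> 2"
      by (simp add: card_insert_le_m1)
    finally show ?thesis .
  qed
  then have "card (\<Union>i. ?crossings i) \<le> 2 * CARD('k)"
    using card_UN_le[of UNIV ?crossings] sum_mono[of UNIV "\<lambda>i. card (?crossings i)" "\<lambda>_. 2"]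
    by (simp add: mult.commute)
  moreover have "card (breakpoints f \<rho>) \<le> card {0, 1 :: real} + card (\<Union>i. ?crossings i)"
    unfolding breakpoints_def by (rule card_Un_le)
  ultimately show ?thesis
    by simp
qed

lemma card_cell_normals_le: "card (cell_normals f \<rho>) \<le> 4 + 4 * CARD('k)"
proof -
  have "card (cell_normals f \<rho>) \<le> card (breakpoints f \<rho>) + card (breakpoints f \<rho>)"
    unfolding cell_normals_def
    by (rule order.trans[OF card_Un_le add_mono[OF card_image_le card_image_le]])
      (simp_all add: finite_breakpoints)
  then show ?thesis
    using card_breakpoints_le[of \<rho>] by simp
qed

lemma finite_cell_normals: "finite (cell_normals f \<rho>)"
  by (simp add: cell_normals_def finite_breakpoints)

lemma previous_breakpoint:
  assumes "0 < t"
  obtains a where "a \<in> breakpoints f \<rho>" "0 \<le> a" "a < t"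
    and "\<forall>b\<in>breakpoints f \<rho>. b < t \<longrightarrow> b \<le> a"
proof
  let ?below = "{b \<in> breakpoints f \<rho>. b < t}"
  have "finite ?below" "0 \<in> ?below"
    using finite_breakpoints zero_one_mem_breakpoints assms by auto
  moreover from this have "Max ?below \<in> ?below"
    by (intro Max_in) auto
  ultimately show "Max ?below \<in> breakpoints f \<rho>" "0 \<le> Max ?below" "Max ?below < t"
    and "\<forall>b\<in>breakpoints f \<rho>. b < t \<longrightarrow> b \<le> Max ?below"
    by auto
qed

lemma next_breakpoint:
  assumes "t < 1"
  obtains c where "c \<in> breakpoints f \<rho>" "t < c" "c \<le> 1"
    and "\<forall>b\<in>breakpoints f \<rho>. t < b \<longrightarrow> c \<le> b"
proof
  let ?above = "{b \<in> breakpoints f \<rho>. t < b}"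
  have "finite ?above" "1 \<in> ?above"
    using finite_breakpoints zero_one_mem_breakpoints assms by auto
  moreover from this have "Min ?above \<in> ?above"
    by (intro Min_in) auto
  ultimately show "Min ?above \<in> breakpoints f \<rho>" "t < Min ?above" "Min ?above \<le> 1"
    and "\<forall>b\<in>breakpoints f \<rho>. t < b \<longrightarrow> Min ?above \<le> b"
    by auto
qed

lemma breakpoint_crossing:
  assumes "0 \<le> s" "t \<le> 1"
    and "\<rho>$i + s * (1 - f$i) \<le> of_int m" "of_int m \<le> \<rho>$i + t * (1 - f$i)"
  obtains b where "b \<in> breakpoints f \<rho>" "s \<le> b" "b \<le> t" "\<rho>$i + b * (1 - f$i) = of_int m"
proof
  define b where "b = (of_int m - \<rho>$i) / (1 - f$i)"
  have slope: "0 < 1 - f$i"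
    using f_range by simp
  then show crossing: "\<rho>$i + b * (1 - f$i) = of_int m"
    by (simp add: b_def)
  show "s \<le> b" "b \<le> t"
    using assms(3,4) slope by (simp_all add: b_def field_simps)
  with assms(1,2) crossing show "b \<in> breakpoints f \<rho>"
    unfolding breakpoints_def by (auto intro!: exI[of _ i])
qed

lemma floor_vec_eq_if_no_breakpoint:
  assumes "0 \<le> s" "s \<le> t" "t \<le> 1" and no_break: "\<forall>b\<in>breakpoints f \<rho>. \<not> (s < b \<and> b \<le> t)"
  shows "floor_vec f \<rho> s = floor_vec f \<rho> t"
proof -
  have "\<lfloor>\<rho>$i + s * (1 - f$i)\<rfloor> = \<lfloor>\<rho>$i + t * (1 - f$i)\<rfloor>" for i
  proof (rule ccontr)
    define m where "m = \<lfloor>\<rho>$i + t * (1 - f$i)\<rfloor>"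
    assume "\<lfloor>\<rho>$i + s * (1 - f$i)\<rfloor> \<noteq> m"
    with floor_vec_mono[OF assms(2), of \<rho> i] have "\<lfloor>\<rho>$i + s * (1 - f$i)\<rfloor> < m"
      by (simp add: floor_vec_def m_def)
    then have below: "\<rho>$i + s * (1 - f$i) < of_int m"
      by (simp add: floor_less_iff)
    moreover have "of_int m \<le> \<rho>$i + t * (1 - f$i)"
      by (simp add: m_def)
    ultimately obtain b where "b \<in> breakpoints f \<rho>" "s \<le> b" "b \<le> t"
      and "\<rho>$i + b * (1 - f$i) = of_int m"
      using breakpoint_crossing assms(1,3) by (metis less_le)
    with below no_break show False
      by (metis less_le)
  qed
  then show ?thesis
    by (simp add: floor_vec_def vec_eq_iff)
qed

lemma floor_vec_left_eq_if_no_breakpoint: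
  assumes "0 \<le> s" "s < t" "t \<le> 1" and no_break: "\<forall>b\<in>breakpoints f \<rho>. \<not> (s < b \<and> b < t)"
  shows "floor_vec_left f \<rho> t = floor_vec f \<rho> s"
proof -
  have "\<lceil>\<rho>$i + t * (1 - f$i)\<rceil> - 1 = \<lfloor>\<rho>$i + s * (1 - f$i)\<rfloor>" for i
  proof (rule ccontr)
    define m where "m = \<lceil>\<rho>$i + t * (1 - f$i)\<rceil> - 1"
    have "s * (1 - f$i) < t * (1 - f$i)"
      using f_range assms(2) by simp
    then have "\<lfloor>\<rho>$i + s * (1 - f$i)\<rfloor> \<le> m"
      unfolding m_def by linarith
    moreover assume "m \<noteq> \<lfloor>\<rho>$i + s * (1 - f$i)\<rfloor>"
    ultimately have "\<lfloor>\<rho>$i + s * (1 - f$i)\<rfloor> < m"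
      by simp
    then have below: "\<rho>$i + s * (1 - f$i) < of_int m"
      by (simp add: floor_less_iff)
    have above: "of_int m < \<rho>$i + t * (1 - f$i)"
      unfolding m_def by linarith
    obtain b where "b \<in> breakpoints f \<rho>" "s \<le> b" "b \<le> t"
      and "\<rho>$i + b * (1 - f$i) = of_int m"
      using breakpoint_crossing[of s t \<rho> i m] assms(1,3) below above by auto
    with below above no_break show False
      by (metis less_le)
  qed
  then show ?thesis
    by (simp add: floor_vec_def floor_vec_left_def vec_eq_iff)
qed

lemma floor_vec_on_gap:
  assumes "0 \<le> a" "c \<le> 1" and gap: "\<forall>b\<in>breakpoints f \<rho>. \<not> (a < b \<and> b < c)"
  shows "a \<le> s \<Longrightarrow> s < c \<Longrightarrow> floor_vec f \<rho> s = floor_vec f \<rho> a"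
    and "a < s \<Longrightarrow> s \<le> c \<Longrightarrow> floor_vec_left f \<rho> s = floor_vec f \<rho> a"
  using assms floor_vec_eq_if_no_breakpoint[of a s \<rho>] floor_vec_left_eq_if_no_breakpoint[of a s \<rho>]
  by force+

lemma slack_pos_before_iff:
  assumes \<mu>_nonneg: "\<forall>i. 0 \<le> \<mu>$i" and f_pos: "0 < inner \<mu> f" and "0 < t" "t \<le> 1"
  shows "(\<forall>s<t. 0 < inner \<mu> (slack f \<rho> s)) \<longleftrightarrow> 0 \<le> inner \<mu> (slack_left f \<rho> t)"
proof -
  obtain a where a: "a \<in> breakpoints f \<rho>" "0 \<le> a" "a < t"
    and a_max: "\<forall>b\<in>breakpoints f \<rho>. b < t \<longrightarrow> b \<le> a"
    using previous_breakpoint[OF \<open>0 < t\<close>] .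
  have affine: "inner \<mu> (slack f \<rho> s) = inner \<mu> (slack_left f \<rho> t) + (t - s) * inner \<mu> f"
    if "a \<le> s" "s < t" for s
  proof -
    have "floor_vec_left f \<rho> t = floor_vec f \<rho> s"
      using a a_max that \<open>t \<le> 1\<close> by (intro floor_vec_left_eq_if_no_breakpoint) force+
    then show ?thesis
      by (simp add: slack_def slack_left_def algebra_simps)
  qed
  show ?thesis
  proof
    assume "\<forall>s<t. 0 < inner \<mu> (slack f \<rho> s)"
    then show "0 \<le> inner \<mu> (slack_left f \<rho> t)"
      using affine \<open>a < t\<close> f_pos by (intro nonneg_if_pos_on_left[of a t "inner \<mu> f"]) auto
  next
    assume left_nonneg: "0 \<le> inner \<mu> (slack_left f \<rho> t)"
    show "\<forall>s<t. 0 < inner \<mu> (slack f \<rho> s)"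
    proof (intro allI impI)
      fix s assume "s < t"
      have "0 < (t - max s a) * inner \<mu> f"
        using f_pos \<open>s < t\<close> \<open>a < t\<close> by simp
      then have "0 < inner \<mu> (slack f \<rho> (max s a))"
        using affine[of "max s a"] left_nonneg \<open>s < t\<close> \<open>a < t\<close> by simp
      also have "\<dots> \<le> inner \<mu> (slack f \<rho> s)"
        using slack_strict_antimono[OF \<mu>_nonneg f_pos, of s a \<rho>] by (cases "s < a") auto
      finally show "0 < inner \<mu> (slack f \<rho> s)" .
    qed
  qed
qed

lemma is_threshold_iff:
  assumes "\<forall>i. 0 \<le> \<mu>$i" "0 < inner \<mu> f" "0 < t" "t \<le> 1"
  shows "is_threshold f \<rho> \<mu> t \<longleftrightarrow> inner \<mu> (slack f \<rho> t) \<le> 0 \<and> 0 \<le> inner \<mu> (slack_left f \<rho> t)"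
  using slack_pos_before_iff[OF assms] by (simp add: is_threshold_def)

lemma slack_pos_right_nbhd:
  assumes f_pos: "0 < inner \<mu> f" and "0 \<le> t" "t < 1" and slack_pos: "0 < inner \<mu> (slack f \<rho> t)"
  obtains e where "0 < e" "\<And>x. t \<le> x \<Longrightarrow> x < t + e \<Longrightarrow> 0 < inner \<mu> (slack f \<rho> x)"
proof -
  obtain c where "t < c" "c \<le> 1" and c_min: "\<forall>b\<in>breakpoints f \<rho>. t < b \<longrightarrow> c \<le> b"
    using next_breakpoint[OF \<open>t < 1\<close>] by blast
  define e where "e = min (c - t) (inner \<mu> (slack f \<rho> t) / inner \<mu> f)"
  show ?thesis
  proof (rule that)
    show "0 < e"
      using \<open>t < c\<close> slack_pos f_pos by (simp add: e_def)
    fix x assume "t \<le> x" "x < t + e"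
    then have "floor_vec f \<rho> x = floor_vec f \<rho> t"
      using c_min \<open>0 \<le> t\<close> \<open>c \<le> 1\<close>
      by (intro floor_vec_eq_if_no_breakpoint[symmetric]) (force simp: e_def)+
    then have "inner \<mu> (slack f \<rho> x) = inner \<mu> (slack f \<rho> t) - (x - t) * inner \<mu> f"
      by (rule inner_slack_shift)
    moreover have "x - t < inner \<mu> (slack f \<rho> t) / inner \<mu> f"
      using \<open>x < t + e\<close> by (simp add: e_def)
    then have "(x - t) * inner \<mu> f < inner \<mu> (slack f \<rho> t)"
      using f_pos by (simp add: pos_less_divide_eq)
    ultimately show "0 < inner \<mu> (slack f \<rho> x)"
      by simp
  qed
qed

lemma threshold_exists:
  assumes \<mu>_pos: "\<forall>i. 0 < \<mu>$i" and f_pos: "0 < inner \<mu> f"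
  obtains t where "0 \<le> t" "t \<le> 1" "is_threshold f \<rho> \<mu> t"
proof -
  define T where "T = {t. inner \<mu> (slack f \<rho> t) \<le> 0}"
  have \<mu>_nonneg: "\<forall>i. 0 \<le> \<mu>$i"
    using \<mu>_pos by (simp add: less_imp_le)
  have "1 \<in> T"
    using slack_one_nonpos[OF \<mu>_nonneg] by (simp add: T_def)
  have T_nonneg: "0 \<le> t" if "t \<in> T" for t
  proof (rule ccontr)
    assume "\<not> 0 \<le> t"
    then show False
      using slack_pos_of_neg[OF \<mu>_pos, of t f \<rho>] that by (simp add: T_def)
  qed
  then have "bdd_below T"
    by (rule bdd_belowI)
  define t where "t = Inf T"
  have "0 \<le> t" "t \<le> 1"
    using cInf_greatest[of T 0] cInf_lower[OF \<open>1 \<in> T\<close> \<open>bdd_below T\<close>] T_nonneg \<open>1 \<in> T\<close>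
    by (auto simp: t_def)
  have before: "\<forall>s<t. 0 < inner \<mu> (slack f \<rho> s)"
  proof (intro allI impI)
    fix s assume "s < t"
    then have "s \<notin> T"
      using cInf_lower[OF _ \<open>bdd_below T\<close>, of s] by (auto simp: t_def)
    then show "0 < inner \<mu> (slack f \<rho> s)"
      by (simp add: T_def)
  qed
  have "inner \<mu> (slack f \<rho> t) \<le> 0"
  proof (rule ccontr)
    assume "\<not> inner \<mu> (slack f \<rho> t) \<le> 0"
    then have slack_pos: "0 < inner \<mu> (slack f \<rho> t)"
      by simp
    then have "t < 1"
      using \<open>t \<le> 1\<close> \<open>1 \<in> T\<close> by (cases "t = 1") (auto simp: T_def)
    then obtain e where "0 < e" and right: "\<And>x. t \<le> x \<Longrightarrow> x < t + e \<Longrightarrow> 0 < inner \<mu> (slack f \<rho> x)"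
      using slack_pos_right_nbhd[OF f_pos \<open>0 \<le> t\<close> _ slack_pos] by blast
    have "t + e \<le> x" if "x \<in> T" for x
      using right[of x] cInf_lower[OF that \<open>bdd_below T\<close>] that by (force simp: t_def T_def)
    then have "t + e \<le> t"
      unfolding t_def using \<open>1 \<in> T\<close> by (intro cInf_greatest) auto
    then show False
      using \<open>0 < e\<close> by simp
  qed
  with before \<open>0 \<le> t\<close> \<open>t \<le> 1\<close> show ?thesis
    using that by (simp add: is_threshold_def)
qed

lemma threshold_in_gap:
  assumes \<mu>_nonneg: "\<forall>i. 0 \<le> \<mu>$i" and f_pos: "0 < inner \<mu> f"
    and "0 \<le> a" "a < c" "c \<le> 1" and gap: "\<forall>b\<in>breakpoints f \<rho>. \<not> (a < b \<and> b < c)"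
    and above_a: "0 < inner \<mu> (slack f \<rho> a)" and below_c: "inner \<mu> (slack_left f \<rho> c) < 0"
  shows "is_threshold f \<rho> \<mu> (inner \<mu> (\<rho> - floor_vec f \<rho> a) / inner \<mu> f)"
proof -
  define q where "q = \<rho> - floor_vec f \<rho> a"
  define t where "t = inner \<mu> q / inner \<mu> f"
  have "a * inner \<mu> f < inner \<mu> q"
    using above_a by (simp add: q_def slack_def inner_diff_right)
  then have "a < t"
    using f_pos by (simp add: t_def pos_less_divide_eq)
  have "inner \<mu> q < c * inner \<mu> f"
    using below_c floor_vec_on_gap(2)[OF \<open>0 \<le> a\<close> \<open>c \<le> 1\<close> gap \<open>a < c\<close>]
    by (simp add: q_def slack_left_def inner_diff_right)
  then have "t < c"
    using f_pos by (simp add: t_def pos_divide_less_eq)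
  have "inner \<mu> q - t * inner \<mu> f = 0"
    using f_pos unfolding t_def by simp
  moreover have "floor_vec f \<rho> t = floor_vec f \<rho> a" "floor_vec_left f \<rho> t = floor_vec f \<rho> a"
    using floor_vec_on_gap[OF \<open>0 \<le> a\<close> \<open>c \<le> 1\<close> gap, of t] \<open>a < t\<close> \<open>t < c\<close> by simp_all
  ultimately have "inner \<mu> (slack f \<rho> t) = 0" "inner \<mu> (slack_left f \<rho> t) = 0"
    by (simp_all add: slack_def slack_left_def q_def inner_diff_right)
  moreover have "0 < t" "t \<le> 1"
    using \<open>0 \<le> a\<close> \<open>a < t\<close> \<open>t < c\<close> \<open>c \<le> 1\<close> by auto
  ultimately show ?thesis
    using is_threshold_iff[OF \<mu>_nonneg f_pos] by (simp add: t_def q_def)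
qed

lemma pi_fun_on_cell_at_breakpoint:
  assumes t0: "t0 \<in> breakpoints f \<rho>" "is_threshold f \<rho> \<mu>0 t0"
    and \<mu>0_nonneg: "\<forall>i. 0 \<le> \<mu>0$i" and f_pos0: "0 < inner \<mu>0 f"
    and \<mu>_pos: "\<forall>i. 0 < \<mu>$i" and f_pos: "0 < inner \<mu> f"
    and signs: "same_signs (cell_normals f \<rho>) \<mu> \<mu>0"
  shows "pi_fun f \<mu> \<rho> = t0"
proof -
  have \<mu>_nonneg: "\<forall>i. 0 \<le> \<mu>$i"
    using \<mu>_pos by (simp add: less_imp_le)
  have "t0 \<in> {0..1}"
    using t0(1) breakpoints_subset by blast
  then have "0 \<le> t0" "t0 \<le> 1"
    by simp_all
  have normals: "slack f \<rho> t0 \<in> cell_normals f \<rho>" "slack_left f \<rho> t0 \<in> cell_normals f \<rho>"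
    using t0(1) by (auto simp: cell_normals_def)
  note transfer = same_signs_iffs[OF signs normals(1)] same_signs_iffs[OF signs normals(2)]
  have "is_threshold f \<rho> \<mu> t0"
  proof (cases "t0 = 0")
    case True
    with t0(2) have "inner \<mu>0 (slack f \<rho> 0) \<le> 0"
      by (simp add: is_threshold_def)
    then show ?thesis
      using True transfer(1) is_threshold_0_iff[OF \<mu>_pos] by simp
  next
    case False
    with \<open>0 \<le> t0\<close> have "0 < t0"
      by simp
    then show ?thesis
      using t0(2) transfer is_threshold_iff[OF \<mu>0_nonneg f_pos0 _ \<open>t0 \<le> 1\<close>]
        is_threshold_iff[OF \<mu>_nonneg f_pos _ \<open>t0 \<le> 1\<close>]
      by simp
  qed
  then show ?thesis
    using pi_fun_eq_threshold[OF \<mu>_nonneg f_pos] by blast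
qed

lemma pi_fun_on_cell_off_breakpoints:
  assumes t0: "t0 \<notin> breakpoints f \<rho>" "0 \<le> t0" "t0 \<le> 1" "is_threshold f \<rho> \<mu>0 t0"
    and \<mu>0_nonneg: "\<forall>i. 0 \<le> \<mu>0$i" and f_pos0: "0 < inner \<mu>0 f"
  obtains q where "\<And>\<mu>. \<forall>i. 0 < \<mu>$i \<Longrightarrow> 0 < inner \<mu> f \<Longrightarrow> same_signs (cell_normals f \<rho>) \<mu> \<mu>0 \<Longrightarrow>
    pi_fun f \<mu> \<rho> = inner \<mu> q / inner \<mu> f"
proof -
  have "0 < t0" "t0 < 1"
    using t0 zero_one_mem_breakpoints[of f \<rho>] by (auto simp: le_less)
  obtain a where a: "a \<in> breakpoints f \<rho>" "0 \<le> a" "a < t0"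
    and a_max: "\<forall>b\<in>breakpoints f \<rho>. b < t0 \<longrightarrow> b \<le> a"
    using previous_breakpoint[OF \<open>0 < t0\<close>] .
  obtain c where c: "c \<in> breakpoints f \<rho>" "t0 < c" "c \<le> 1"
    and c_min: "\<forall>b\<in>breakpoints f \<rho>. t0 < b \<longrightarrow> c \<le> b"
    using next_breakpoint[OF \<open>t0 < 1\<close>] .
  have gap: "\<forall>b\<in>breakpoints f \<rho>. \<not> (a < b \<and> b < c)"
    using a_max c_min t0(1) by (metis linorder_neqE_linordered_idom not_le)
  note on_gap = floor_vec_on_gap[OF \<open>0 \<le> a\<close> \<open>c \<le> 1\<close> gap]
  have "0 < inner \<mu>0 (slack f \<rho> a)"
    using t0(4) a(3) by (simp add: is_threshold_def)
  moreover have "inner \<mu>0 (slack_left f \<rho> c) < 0"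
  proof -
    have "inner \<mu>0 (slack_left f \<rho> c) = inner \<mu>0 (slack f \<rho> t0) - (c - t0) * inner \<mu>0 f"
      using on_gap(1)[of t0] on_gap(2)[of c] a(3) c(2)
      by (simp add: slack_def slack_left_def algebra_simps)
    moreover have "0 < (c - t0) * inner \<mu>0 f"
      using c(2) f_pos0 by simp
    ultimately show ?thesis
      using t0(4) by (simp add: is_threshold_def)
  qed
  moreover have "slack f \<rho> a \<in> cell_normals f \<rho>" "slack_left f \<rho> c \<in> cell_normals f \<rho>"
    using a(1) c(1) by (auto simp: cell_normals_def)
  ultimately have "pi_fun f \<mu> \<rho> = inner \<mu> (\<rho> - floor_vec f \<rho> a) / inner \<mu> f"
    if "\<forall>i. 0 < \<mu>$i" "0 < inner \<mu> f" "same_signs (cell_normals f \<rho>) \<mu> \<mu>0" for \<mu>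
    using that same_signs_iffs[OF that(3)] a(3) c(2) \<open>0 \<le> a\<close> \<open>c \<le> 1\<close> gap
    by (intro pi_fun_eq_threshold threshold_in_gap) (auto simp: less_imp_le)
  then show ?thesis
    using that by blast
qed

lemma pi_fun_linear_fractional_on_cell:
  assumes \<mu>0_pos: "\<forall>i. 0 < \<mu>0$i" and f_pos0: "0 < inner \<mu>0 f"
  obtains p where "\<And>\<mu>. \<forall>i. 0 < \<mu>$i \<Longrightarrow> 0 < inner \<mu> f \<Longrightarrow> same_signs (cell_normals f \<rho>) \<mu> \<mu>0 \<Longrightarrow>
    pi_fun f \<mu> \<rho> = inner \<mu> p / inner \<mu> f"
proof -
  have \<mu>0_nonneg: "\<forall>i. 0 \<le> \<mu>0$i"
    using \<mu>0_pos by (simp add: less_imp_le)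
  obtain t0 where t0: "0 \<le> t0" "t0 \<le> 1" "is_threshold f \<rho> \<mu>0 t0"
    using threshold_exists[OF \<mu>0_pos f_pos0] .
  show ?thesis
  proof (cases "t0 \<in> breakpoints f \<rho>")
    case True
    have "pi_fun f \<mu> \<rho> = inner \<mu> (t0 *\<^sub>R f) / inner \<mu> f"
      if "\<forall>i. 0 < \<mu>$i" "0 < inner \<mu> f" "same_signs (cell_normals f \<rho>) \<mu> \<mu>0" for \<mu>
      using pi_fun_on_cell_at_breakpoint[OF True t0(3) \<mu>0_nonneg f_pos0 that] that(2) by simp
    then show ?thesis
      using that by blast
  next
    case False
    then show ?thesis
      using pi_fun_on_cell_off_breakpoints[OF False t0 \<mu>0_nonneg f_pos0] that by blast
  qed
qed

lemma card_cell_hyperplanes_le: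
  assumes "finite J"
  shows "finite (\<Union>j\<in>J. (\<lambda>w. (w, 0::real)) ` (cell_normals f (r j) - {0}))"
    and "card (\<Union>j\<in>J. (\<lambda>w. (w, 0::real)) ` (cell_normals f (r j) - {0})) \<le> card J * (4 + 4 * CARD('k))"
proof -
  show "finite (\<Union>j\<in>J. (\<lambda>w. (w, 0::real)) ` (cell_normals f (r j) - {0}))"
    using assms finite_cell_normals by simp
  have "card ((\<lambda>w. (w, 0::real)) ` (cell_normals f (r j) - {0})) \<le> 4 + 4 * CARD('k)" for j
    using card_image_le[of "cell_normals f (r j) - {0}" "\<lambda>w. (w, 0::real)"]
      card_Diff1_le[of "cell_normals f (r j)" 0] card_cell_normals_le[of "r j"]
      finite_cell_normals[of "r j"]
    by simp
  then have "(\<Sum>j\<in>J. card ((\<lambda>w. (w, 0::real)) ` (cell_normals f (r j) - {0})))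
      \<le> (\<Sum>j\<in>J. 4 + 4 * CARD('k))"
    by (rule sum_mono)
  then show "card (\<Union>j\<in>J. (\<lambda>w. (w, 0::real)) ` (cell_normals f (r j) - {0})) \<le> card J * (4 + 4 * CARD('k))"
    using card_UN_le[OF assms, of "\<lambda>j. (\<lambda>w. (w, 0::real)) ` (cell_normals f (r j) - {0})"]
    by simp
qed

lemma pi_fun_linear_fractional_on_arrangement_cell:
  assumes "f \<noteq> 0" "0 < \<tau>" "\<mu>0 \<in> simplex_tau \<tau>"
    and "(\<lambda>w. (w, 0)) ` (cell_normals f \<rho> - {0}) \<subseteq> H"
  obtains p where "\<And>\<mu>. \<mu> \<in> arrangement_cell H (simplex_tau \<tau>) \<mu>0 \<Longrightarrow>
    pi_fun f \<mu> \<rho> = inner p \<mu> / inner f \<mu>"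
proof -
  have pos: "\<forall>i. 0 < \<mu>$i" "0 < inner \<mu> f" if "\<mu> \<in> simplex_tau \<tau>" for \<mu>
    using simplex_tau_pos[OF \<open>0 < \<tau>\<close> that] inner_pos_if_pos_nonneg_nonzero f_range \<open>f \<noteq> 0\<close>
    by auto
  obtain p where p: "\<And>\<mu>. \<forall>i. 0 < \<mu>$i \<Longrightarrow> 0 < inner \<mu> f \<Longrightarrow>
      same_signs (cell_normals f \<rho>) \<mu> \<mu>0 \<Longrightarrow> pi_fun f \<mu> \<rho> = inner \<mu> p / inner \<mu> f"
    using pi_fun_linear_fractional_on_cell[OF pos[OF \<open>\<mu>0 \<in> simplex_tau \<tau>\<close>]] by blast
  show ?thesis
  proof (rule that)
    fix \<mu> assume cell: "\<mu> \<in> arrangement_cell H (simplex_tau \<tau>) \<mu>0"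
    then have "\<mu> \<in> simplex_tau \<tau>"
      by (simp add: arrangement_cell_def)
    then show "pi_fun f \<mu> \<rho> = inner p \<mu> / inner f \<mu>"
      using p[OF pos same_signs_if_in_arrangement_cell[OF assms(4) cell]] by (simp add: inner_commute)
  qed
qed

end

lemma four_add_four_mul_le_square:
  fixes k \<tau> :: real
  assumes "0 \<le> k" "2 * k \<le> \<tau>"
  shows "4 + 4 * k \<le> 2 * (\<tau> + 3)^2"
proof -
  have "\<tau> + 3 \<le> (\<tau> + 3)^2"
    using assms by (simp add: power2_eq_square)
  then show ?thesis
    using assms by simp
qed

theorem proposition2:
  fixes f :: "real^'k" and r :: "nat \<Rightarrow> real^'k" and n :: nat and \<tau> :: real
  assumes "CARD('k) \<ge> 2"
    and "\<forall>i. 0 \<le> f $ i \<and> f $ i < 1" and "f \<noteq> 0"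
    and "\<tau> \<ge> 2 * real CARD('k)"
  shows "\<exists>(d :: real^'k) (d0 :: real) (H :: ((real^'k) \<times> real) set).
           (\<forall>\<mu> \<in> simplex_tau \<tau>. inner d \<mu> + d0 > 0) \<and>
           finite H \<and> (\<forall>(w, c) \<in> H. w \<noteq> 0) \<and>
           real (card H) \<le> 2 * real n * (\<tau> + 3)^2 \<and>
           (\<forall>\<mu>0 \<in> simplex_tau \<tau>. \<forall>j \<in> {1..n}.
              \<exists>(p :: real^'k) (p0 :: real).
                \<forall>\<mu> \<in> arrangement_cell H (simplex_tau \<tau>) \<mu>0.
                  pi_fun f \<mu> (r j) = (inner p \<mu> + p0) / (inner d \<mu> + d0))"
proof -
  define H where "H = (\<Union>j\<in>{1..n}. (\<lambda>w. (w, 0::real)) ` (cell_normals f (r j) - {0}))"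
  have "0 < \<tau>"
    using assms(1,4) by simp
  have "real (card H) \<le> real (n * (4 + 4 * CARD('k)))"
    using card_cell_hyperplanes_le(2)[OF assms(2), of "{1..n}" r] unfolding H_def of_nat_le_iff by simp
  also have "\<dots> \<le> real n * (2 * (\<tau> + 3)^2)"
    using four_add_four_mul_le_square[OF _ assms(4)] by (simp add: mult_left_mono)
  finally have card_H: "real (card H) \<le> 2 * real n * (\<tau> + 3)^2"
    by simp
  have f_nonneg: "\<forall>i. 0 \<le> f$i"
    using assms(2) by simp
  show ?thesis
  proof (intro exI[of _ f] exI[of _ "0::real"] exI[of _ H] conjI)
    show "\<forall>\<mu>\<in>simplex_tau \<tau>. 0 < inner f \<mu> + 0"
      using inner_pos_if_pos_nonneg_nonzero[OF _ f_nonneg assms(3)] simplex_tau_pos[OF \<open>0 < \<tau>\<close>]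
      by (auto simp: inner_commute)
    show "finite H"
      unfolding H_def by (rule card_cell_hyperplanes_le(1)[OF assms(2)]) simp
    show "\<forall>(w, c)\<in>H. w \<noteq> 0"
      by (auto simp: H_def)
    show "real (card H) \<le> 2 * real n * (\<tau> + 3)^2"
      by (rule card_H)
    show "\<forall>\<mu>0\<in>simplex_tau \<tau>. \<forall>j\<in>{1..n}. \<exists>p p0. \<forall>\<mu>\<in>arrangement_cell H (simplex_tau \<tau>) \<mu>0.
        pi_fun f \<mu> (r j) = (inner p \<mu> + p0) / (inner f \<mu> + 0)"
    proof (intro ballI)
      fix \<mu>0 :: "real^'k" and j assume "\<mu>0 \<in> simplex_tau \<tau>" "j \<in> {1..n}"
      moreover from this have "(\<lambda>w. (w, 0)) ` (cell_normals f (r j) - {0}) \<subseteq> H"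
        by (auto simp: H_def)
      ultimately obtain p where "\<And>\<mu>. \<mu> \<in> arrangement_cell H (simplex_tau \<tau>) \<mu>0 \<Longrightarrow>
          pi_fun f \<mu> (r j) = inner p \<mu> / inner f \<mu>"
        using pi_fun_linear_fractional_on_arrangement_cell[OF assms(2,3) \<open>0 < \<tau>\<close>] by blast
      then show "\<exists>p p0. \<forall>\<mu>\<in>arrangement_cell H (simplex_tau \<tau>) \<mu>0.
          pi_fun f \<mu> (r j) = (inner p \<mu> + p0) / (inner f \<mu> + 0)"
        by (intro exI[of _ p] exI[of _ 0]) simp
    qed
  qed
qed

end
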